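(* Consider the multiset combinatorial auction model described in the context. An auction that uses only demand queries cannot guarantee even $55\%$ efficiency, even if it asks all (uncountably many) possible demand queries, i.e., one for every price vector in $[0,\infty)^m$, and even if each bidder additionally reports her true value for every bundle she requested in response to those demand queries. Precisely: there exist $n,m,c$ and value functions $(v_i)_{i\in N}$ such that, for every set $P\subseteq[0,\infty)^m$ of demand-query prices (in particular $P=[0,\infty)^m$), there are truthful demand-query responses and an allocation maximizing the inferred social welfare $\sum_i\tilde v_i(a_i;R_i)$ over $\mathcal{F}$ whose efficiency is less than $55\%$; and the same holds when the reports $R_i$ additionally contain value-query responses $(x,v_i(x))$ for every bundle $x$ that bidder $i$ requested in some demand query in $P$.
   Context: Multiset combinatorial auction: bidders $N=\{1,\dots,n\}$, items $M=\{1,\dots,m\}$ with capacities $c\in\mathbb{N}^m$. Bundles are $x\in\mathcal{X}=\{0,\dots,c_1\}\times\cdots\times\{0,\dots,c_m\}$. Each bidder $i$ has a value function $v_i:\mathcal{X}\to\mathbb{R}_{\ge0}$. Feasible allocations: $\mathcal{F}=\{a\in\mathcal{X}^n:\sum_i a_{ij}\le c_j\ \forall j\}$. Social welfare $V(a)=\sum_i v_i(a_i)$; efficiency of $a$ is $V(a)/\max_{a'\in\mathcal{F}}V(a')$. A demand query at prices $p\in\mathbb{R}^m_{\ge0}$ is answered truthfully by bidder $i$ with some $x_i^*(p)\in\arg\max_{x\in\mathcal{X}}\{v_i(x)-\langle p,x\rangle\}$. A value query for $x$ is answered with $v_i(x)$. With reports $R_i$ consisting of demand responses $R_i^{DQ}$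 (pairs $(x,p)$) and value responses $R_i^{VQ}$ (pairs $(x,v_i(x))$), the inferred value is $\tilde v_i(x;R_i)=v_i(x)$ if $x$ appears in $R_i^{VQ}$ and otherwise the supremum (a maximum when finitely many queries are asked) of $\{\langle x,p\rangle:(x,p)\in R_i^{DQ}\}\cup\{0\}$. The auction allocates according to a solution of the winner determination problem $\max_{a\in\mathcal{F}}\sum_i\tilde v_i(a_i;R_i)$. *)

theory Defs
  imports Complex_Main
begin

text \<open>Items are indexed by 0..<m, bidders by 0..<n. Bundles are functions
  nat => nat, vanishing outside the items; prices are functions nat => real,
  vanishing outside the items.\<close>

definition bundles :: "nat \<Rightarrow> (nat \<Rightarrow> nat) \<Rightarrow> (nat \<Rightarrow> nat) set" where
  "bundles m c = {x. (\<forall>j<m. x j \<le> c j) \<and> (\<forall>j. m \<le> j \<longrightarrow> x j = 0)}"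

definition prices :: "nat \<Rightarrow> (nat \<Rightarrow> real) set" where
  "prices m = {p. (\<forall>j<m. 0 \<le> p j) \<and> (\<forall>j. m \<le> j \<longrightarrow> p j = 0)}"

definition ip :: "nat \<Rightarrow> (nat \<Rightarrow> nat) \<Rightarrow> (nat \<Rightarrow> real) \<Rightarrow> real" where
  "ip m x p = (\<Sum>j<m. real (x j) * p j)"

definition feasible :: "nat \<Rightarrow> nat \<Rightarrow> (nat \<Rightarrow> nat) \<Rightarrow> (nat \<Rightarrow> nat \<Rightarrow> nat) set" where
  "feasible n m c = {a. (\<forall>i<n. a i \<in> bundles m c) \<and> (\<forall>i. n \<le> i \<longrightarrow> a i = (\<lambda>_. 0))
                        \<and> (\<forall>j<m. (\<Sum>i<n. a i j) \<le> c j)}"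

definition welfare :: "nat \<Rightarrow> (nat \<Rightarrow> (nat \<Rightarrow> nat) \<Rightarrow> real) \<Rightarrow> (nat \<Rightarrow> nat \<Rightarrow> nat) \<Rightarrow> real" where
  "welfare n v a = (\<Sum>i<n. v i (a i))"

definition opt_welfare :: "nat \<Rightarrow> nat \<Rightarrow> (nat \<Rightarrow> nat) \<Rightarrow> (nat \<Rightarrow> (nat \<Rightarrow> nat) \<Rightarrow> real) \<Rightarrow> real" where
  "opt_welfare n m c v = Max (welfare n v ` feasible n m c)"

text \<open>Efficiency of a is welfare n v a / opt_welfare n m c v; "efficiency < 55%" is
  stated as welfare n v a < 55/100 * opt_welfare n m c v (which also forces
  the optimum to be positive, so that the ratio is meaningful).\<close>

definition truthful_dq ::
  "nat \<Rightarrow> nat \<Rightarrow> (nat \<Rightarrow> nat) \<Rightarrow> (nat \<Rightarrow> (nat \<Rightarrow> nat) \<Rightarrow> real) \<Rightarrow> (nat \<Rightarrow> real) set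
     \<Rightarrow> (nat \<Rightarrow> (nat \<Rightarrow> real) \<Rightarrow> (nat \<Rightarrow> nat)) \<Rightarrow> bool" where
  "truthful_dq n m c v P dq = (\<forall>i<n. \<forall>p\<in>P. dq i p \<in> bundles m c \<and>
      (\<forall>y\<in>bundles m c. v i y - ip m y p \<le> v i (dq i p) - ip m (dq i p) p))"

definition inferred_dq ::
  "nat \<Rightarrow> (nat \<Rightarrow> real) set \<Rightarrow> (nat \<Rightarrow> (nat \<Rightarrow> real) \<Rightarrow> (nat \<Rightarrow> nat)) \<Rightarrow> nat \<Rightarrow> (nat \<Rightarrow> nat) \<Rightarrow> real" where
  "inferred_dq m P dq i x = Sup ({ip m x p | p. p \<in> P \<and> dq i p = x} \<union> {0})"

definition inferred_dq_vq ::
  "nat \<Rightarrow> (nat \<Rightarrow> (nat \<Rightarrow> nat) \<Rightarrow> real) \<Rightarrow> (nat \<Rightarrow> real) set \<Rightarrow> (nat \<Rightarrow> (nat \<Rightarrow> real) \<Rightarrow> (nat \<Rightarrow> nat))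
     \<Rightarrow> nat \<Rightarrow> (nat \<Rightarrow> nat) \<Rightarrow> real" where
  "inferred_dq_vq m v P dq i x =
     (if \<exists>p\<in>P. dq i p = x then v i x else inferred_dq m P dq i x)"

definition wdp_solution ::
  "nat \<Rightarrow> nat \<Rightarrow> (nat \<Rightarrow> nat) \<Rightarrow> (nat \<Rightarrow> (nat \<Rightarrow> nat) \<Rightarrow> real) \<Rightarrow> (nat \<Rightarrow> nat \<Rightarrow> nat) \<Rightarrow> bool" where
  "wdp_solution n m c vt a = (a \<in> feasible n m c \<and>
      (\<forall>a'\<in>feasible n m c. welfare n vt a' \<le> welfare n vt a))"

end

theory Submission
  imports Defs
begin

text \<open>One item with 20 copies and two bidders: bidder 0 values any nonempty bundle at 1,
  bidder 1 values 20 copies at 1 and 19 copies at 9/10, so giving 1 and 19 copies yields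
  welfare 19/10. At every price, 20 copies or nothing serve bidder 1 at least as well as
  19 copies, so truthful demand answers exist in which bidder 0 only ever requests one copy
  or nothing and bidder 1 only 20 copies or nothing. The inferred values, with or without
  the value queries, then vanish off these two bundles, which do not fit together; some
  solution of the winner determination problem therefore serves at most one bidder and has
  welfare at most 1 < 55/100 * 19/10.\<close>

lemma finite_bundles: "finite (bundles m c)"
proof (rule finite_subset)
  show "bundles m c \<subseteq> {x. \<forall>j. (j \<in> {..<m} \<longrightarrow> x j \<in> {..sum c {..<m}}) \<and> (j \<notin> {..<m} \<longrightarrow> x j = 0)}"
    by (auto simp: bundles_def intro: order_trans[OF _ member_le_sum])
qed (rule finite_set_of_finite_funs; simp)

lemma finite_feasible: "finite (feasible n m c)"
proof (rule finite_subset)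
  show "feasible n m c \<subseteq> {a. \<forall>i. (i \<in> {..<n} \<longrightarrow> a i \<in> bundles m c) \<and> (i \<notin> {..<n} \<longrightarrow> a i = (\<lambda>_. 0))}"
    by (auto simp: feasible_def)
qed (rule finite_set_of_finite_funs; simp add: finite_bundles)

lemma empty_allocation_feasible: "(\<lambda>_ _. 0) \<in> feasible n m c"
  by (simp add: feasible_def bundles_def)

lemma welfare_le_opt_welfare:
  "a \<in> feasible n m c \<Longrightarrow> welfare n v a \<le> opt_welfare n m c v"
  unfolding opt_welfare_def by (simp add: finite_feasible)

lemma wdp_solution_exists: "\<exists>a. wdp_solution n m c vt a"
proof -
  have "Max (welfare n vt ` feasible n m c) \<in> welfare n vt ` feasible n m c"
    using finite_feasible empty_allocation_feasible[of n m c] by (intro Max_in) auto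
  then obtain a where "a \<in> feasible n m c" "welfare n vt a = Max (welfare n vt ` feasible n m c)"
    by auto
  then show ?thesis
    unfolding wdp_solution_def by (metis Max_ge finite_feasible finite_imageI imageI)
qed

lemma feasible_drop_bundles:
  assumes feasible: "a \<in> feasible n m c" and drop: "\<And>i. a' i = a i \<or> a' i = (\<lambda>_. 0)"
  shows "a' \<in> feasible n m c"
  unfolding feasible_def mem_Collect_eq
proof (intro conjI allI impI)
  fix i assume "i < n"
  then show "a' i \<in> bundles m c"
    using feasible drop[of i] by (auto simp: feasible_def bundles_def)
next
  fix i assume "n \<le> i"
  then show "a' i = (\<lambda>_. 0)"
    using feasible drop[of i] by (auto simp: feasible_def)
next
  fix j assume "j < m"
  have "(\<Sum>i<n. a' i j) \<le> (\<Sum>i<n. a i j)"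
    by (rule sum_mono) (metis drop le_refl zero_le)
  also have "\<dots> \<le> c j"
    using feasible \<open>j < m\<close> by (simp add: feasible_def)
  finally show "(\<Sum>i<n. a' i j) \<le> c j" .
qed

lemma wdp_solution_all_or_nothing:
  assumes vanish: "\<And>i x. i < n \<Longrightarrow> x \<noteq> s i \<Longrightarrow> vt i x = 0"
    and nonempty: "\<And>i. i < n \<Longrightarrow> s i \<noteq> (\<lambda>_. 0)"
  shows "\<exists>a. wdp_solution n m c vt a \<and> (\<forall>i<n. a i = (\<lambda>_. 0) \<or> a i = s i)"
proof -
  obtain a where a: "wdp_solution n m c vt a"
    using wdp_solution_exists by blast
  define a' where "a' i = (if a i = s i then s i else (\<lambda>_. 0))" for i
  have "a \<in> feasible n m c"
    using a by (simp add: wdp_solution_def)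
  then have "a' \<in> feasible n m c"
    by (rule feasible_drop_bundles) (simp add: a'_def)
  moreover have "vt i (a' i) = vt i (a i)" if "i < n" for i
  proof (cases "a i = s i")
    case False
    then have "vt i (a i) = 0" and "vt i (\<lambda>_. 0) = 0"
      using vanish nonempty \<open>i < n\<close> by metis+
    then show ?thesis
      using False by (simp add: a'_def)
  qed (simp add: a'_def)
  then have "welfare n vt a' = welfare n vt a"
    unfolding welfare_def by (intro sum.cong) simp_all
  ultimately have "wdp_solution n m c vt a'"
    using a by (simp add: wdp_solution_def)
  moreover have "\<forall>i<n. a' i = (\<lambda>_. 0) \<or> a' i = s i"
    by (simp add: a'_def)
  ultimately show ?thesis
    by blast
qed

lemma inferred_dq_eq_0:
  assumes "\<And>p. p \<in> P \<Longrightarrow> dq i p = x \<Longrightarrow> ip m x p = 0"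
  shows "inferred_dq m P dq i x = 0"
proof -
  have requested_values: "{ip m x p | p. p \<in> P \<and> dq i p = x} \<union> {0} = {0}"
    using assms by blast
  show ?thesis
    unfolding inferred_dq_def requested_values by simp
qed

lemma inferred_dq_vanishes_off_response:
  assumes "\<forall>p\<in>P. dq i p = (\<lambda>_. 0) \<or> dq i p = s" and "x \<noteq> s"
  shows "inferred_dq m P dq i x = 0"
  by (rule inferred_dq_eq_0) (use assms in \<open>auto simp: ip_def\<close>)

lemma inferred_dq_vq_vanishes_off_response:
  assumes "\<forall>p\<in>P. dq i p = (\<lambda>_. 0) \<or> dq i p = s" and "x \<noteq> s" and "v i (\<lambda>_. 0) = 0"
  shows "inferred_dq_vq m v P dq i x = 0"
proof -
  have "inferred_dq m P dq i x = 0"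
    using assms(1,2) by (rule inferred_dq_vanishes_off_response)
  then show ?thesis
    using assms by (auto simp: inferred_dq_vq_def)
qed

definition units :: "nat \<Rightarrow> nat \<Rightarrow> nat" where
  "units k = (\<lambda>j. if j = 0 then k else 0)"

lemma units_0 [simp]: "units 0 = (\<lambda>_. 0)"
  by (simp add: units_def fun_eq_iff)

lemma units_apply_0 [simp]: "units k 0 = k"
  by (simp add: units_def)

lemma units_eq_0_iff [simp]: "units k = (\<lambda>_. 0) \<longleftrightarrow> k = 0"
  by (metis units_0 units_apply_0)

lemma bundles_single_item: "bundles 1 c = units ` {..c 0}"
proof (intro equalityI subsetI)
  fix x assume "x \<in> bundles 1 c"
  then have "x = units (x 0)" and "x 0 \<le> c 0"
    by (auto simp: bundles_def units_def fun_eq_iff)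
  then show "x \<in> units ` {..c 0}"
    by blast
qed (auto simp: bundles_def units_def)

lemma truthful_dq_single_item:
  assumes "\<And>i p. i < n \<Longrightarrow> p \<in> P \<Longrightarrow> d i p \<le> c 0"
    and "\<And>i p k. i < n \<Longrightarrow> p \<in> P \<Longrightarrow> k \<le> c 0 \<Longrightarrow>
           v i (units k) - real k * p 0 \<le> v i (units (d i p)) - real (d i p) * p 0"
  shows "truthful_dq n 1 c v P (\<lambda>i p. units (d i p))"
  unfolding truthful_dq_def bundles_single_item using assms by (auto simp: ip_def)

definition unit_value :: "nat \<Rightarrow> real" where
  "unit_value k = (if 1 \<le> k then 1 else 0)"

definition bulk_value :: "nat \<Rightarrow> real" where
  "bulk_value k = (if k = 20 then 1 else if k = 19 then 9/10 else 0)"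

definition unit_demand :: "real \<Rightarrow> nat" where
  "unit_demand q = (if q \<le> 1 then 1 else 0)"

definition bulk_demand :: "real \<Rightarrow> nat" where
  "bulk_demand q = (if q \<le> 1/20 then 20 else 0)"

lemma unit_demand_optimal:
  assumes "0 \<le> q"
  shows "unit_value k - real k * q \<le> unit_value (unit_demand q) - real (unit_demand q) * q"
proof (cases "k = 0")
  case False
  then have "q \<le> real k * q"
    using assms by (simp add: mult_le_cancel_right1)
  then show ?thesis
    using False by (simp add: unit_value_def unit_demand_def)
qed (use assms in \<open>simp add: unit_value_def unit_demand_def\<close>)

lemma bulk_demand_optimal:
  assumes "0 \<le> q"
  shows "bulk_value k - real k * q \<le> bulk_value (bulk_demand q) - real (bulk_demand q) * q"
proof -
  have "bulk_value k - real k * q \<le> max 0 (1 - 20 * q)"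
    using assms by (auto simp: bulk_value_def le_max_iff_disj)
  also have "\<dots> = bulk_value (bulk_demand q) - real (bulk_demand q) * q"
    by (simp add: bulk_value_def bulk_demand_def max_def)
  finally show ?thesis .
qed

definition example_valuation :: "nat \<Rightarrow> (nat \<Rightarrow> nat) \<Rightarrow> real" where
  "example_valuation i x = (if i = 0 then unit_value (x 0) else bulk_value (x 0))"

definition example_demand :: "nat \<Rightarrow> real \<Rightarrow> nat" where
  "example_demand i q = (if i = 0 then unit_demand q else bulk_demand q)"

definition target_units :: "nat \<Rightarrow> nat" where
  "target_units i = (if i = 0 then 1 else 20)"

lemma example_valuation_le_1: "example_valuation i x \<le> 1"
  by (simp add: example_valuation_def unit_value_def bulk_value_def)

lemma example_valuation_nonneg: "0 \<le> example_valuation i x"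
  by (simp add: example_valuation_def unit_value_def bulk_value_def)

lemma example_valuation_empty [simp]: "example_valuation i (\<lambda>_. 0) = 0"
  by (simp add: example_valuation_def unit_value_def bulk_value_def)

lemma example_demand_cases: "example_demand i q = 0 \<or> example_demand i q = target_units i"
  by (simp add: example_demand_def unit_demand_def bulk_demand_def target_units_def)

definition example_dq :: "nat \<Rightarrow> (nat \<Rightarrow> real) \<Rightarrow> nat \<Rightarrow> nat" where
  "example_dq i p = units (example_demand i (p 0))"

lemma example_dq_cases: "\<forall>p\<in>P. example_dq i p = (\<lambda>_. 0) \<or> example_dq i p = units (target_units i)"
  using example_demand_cases by (metis example_dq_def units_0)

lemma truthful_example_dq:
  assumes "P \<subseteq> prices 1"
  shows "truthful_dq 2 1 (\<lambda>_. 20) example_valuation P example_dq"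
  unfolding example_dq_def
proof (rule truthful_dq_single_item)
  fix i p k assume "p \<in> P"
  then have "0 \<le> p 0"
    using assms by (auto simp: prices_def)
  then show "example_valuation i (units k) - real k * p 0
      \<le> example_valuation i (units (example_demand i (p 0))) - real (example_demand i (p 0)) * p 0"
    by (simp add: example_valuation_def example_demand_def unit_demand_optimal bulk_demand_optimal)
qed (simp add: example_demand_def unit_demand_def bulk_demand_def)

lemma example_opt_welfare_ge: "19/10 \<le> opt_welfare 2 1 (\<lambda>_. 20) example_valuation"
proof -
  let ?a = "\<lambda>i. if i = 0 then units 1 else if i = 1 then units 19 else (\<lambda>_. 0)"
  have "19/10 = welfare 2 example_valuation ?a"
    by (simp add: welfare_def eval_nat_numeral example_valuation_def unit_value_def bulk_value_def)
  also have "\<dots> \<le> opt_welfare 2 1 (\<lambda>_. 20) example_valuation"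
  proof (rule welfare_le_opt_welfare)
    show "?a \<in> feasible 2 1 (\<lambda>_. 20)"
      unfolding feasible_def bundles_single_item by (simp add: eval_nat_numeral less_Suc_eq)
  qed
  finally show ?thesis .
qed

lemma example_wdp_inefficient:
  assumes vanish: "\<And>i x. x \<noteq> units (target_units i) \<Longrightarrow> vt i x = 0"
  shows "\<exists>a. wdp_solution 2 1 (\<lambda>_. 20) vt a \<and>
           welfare 2 example_valuation a < 55/100 * opt_welfare 2 1 (\<lambda>_. 20) example_valuation"
proof -
  have "\<exists>a. wdp_solution 2 1 (\<lambda>_. 20) vt a \<and> (\<forall>i<2. a i = (\<lambda>_. 0) \<or> a i = units (target_units i))"
    by (rule wdp_solution_all_or_nothing) (use vanish in \<open>auto simp: target_units_def\<close>)
  then obtain a where wdp: "wdp_solution 2 1 (\<lambda>_. 20) vt a"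
    and within: "\<forall>i<2. a i = (\<lambda>_. 0) \<or> a i = units (target_units i)"
    by blast
  have "a 0 = (\<lambda>_. 0) \<or> a 0 = units 1" and "a 1 = (\<lambda>_. 0) \<or> a 1 = units 20"
    using within[rule_format, of 0] within[rule_format, of 1] by (simp_all add: target_units_def)
  moreover have "a 0 0 + a 1 0 \<le> 20"
    using wdp by (simp add: wdp_solution_def feasible_def eval_nat_numeral)
  ultimately have "a 0 = (\<lambda>_. 0) \<or> a 1 = (\<lambda>_. 0)"
    by auto
  then have "welfare 2 example_valuation a \<le> 1"
    using example_valuation_le_1 by (auto simp: welfare_def eval_nat_numeral)
  also have "\<dots> < 55/100 * opt_welfare 2 1 (\<lambda>_. 20) example_valuation"
    using example_opt_welfare_ge by linarith
  finally show ?thesis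
    using wdp by blast
qed

theorem theorem3p2:
  shows "\<exists>(n::nat) (m::nat) (c::nat \<Rightarrow> nat) (v::nat \<Rightarrow> (nat \<Rightarrow> nat) \<Rightarrow> real).
     (\<forall>i<n. \<forall>x\<in>bundles m c. 0 \<le> v i x) \<and>
     (\<forall>P \<subseteq> prices m.
        (\<exists>dq. truthful_dq n m c v P dq \<and>
           (\<exists>a. wdp_solution n m c (inferred_dq m P dq) a \<and>
                welfare n v a < 55 / 100 * opt_welfare n m c v)) \<and>
        (\<exists>dq. truthful_dq n m c v P dq \<and>
           (\<exists>a. wdp_solution n m c (inferred_dq_vq m v P dq) a \<and>
                welfare n v a < 55 / 100 * opt_welfare n m c v)))"
proof (rule exI[of _ 2], rule exI[of _ 1], rule exI[of _ "\<lambda>_. 20"], rule exI[of _ example_valuation],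
    intro conjI ballI allI impI)
  fix i x
  show "0 \<le> example_valuation i x"
    by (rule example_valuation_nonneg)
next
  fix P assume "P \<subseteq> prices 1"
  have "inferred_dq 1 P example_dq i x = 0" if "x \<noteq> units (target_units i)" for i x
    using example_dq_cases that by (rule inferred_dq_vanishes_off_response)
  then show "\<exists>dq. truthful_dq 2 1 (\<lambda>_. 20) example_valuation P dq \<and>
      (\<exists>a. wdp_solution 2 1 (\<lambda>_. 20) (inferred_dq 1 P dq) a \<and>
           welfare 2 example_valuation a < 55 / 100 * opt_welfare 2 1 (\<lambda>_. 20) example_valuation)"
    using example_wdp_inefficient truthful_example_dq[OF \<open>P \<subseteq> prices 1\<close>] by blast
next
  fix P assume "P \<subseteq> prices 1"
  have "inferred_dq_vq 1 example_valuation P example_dq i x = 0" if "x \<noteq> units (target_units i)" for i x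
    using example_dq_cases that example_valuation_empty by (rule inferred_dq_vq_vanishes_off_response)
  then show "\<exists>dq. truthful_dq 2 1 (\<lambda>_. 20) example_valuation P dq \<and>
      (\<exists>a. wdp_solution 2 1 (\<lambda>_. 20) (inferred_dq_vq 1 example_valuation P dq) a \<and>
           welfare 2 example_valuation a < 55 / 100 * opt_welfare 2 1 (\<lambda>_. 20) example_valuation)"
    using example_wdp_inefficient truthful_example_dq[OF \<open>P \<subseteq> prices 1\<close>] by blast
qed

end
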